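(* Let $p(\cdot)\in\mathcal{P}^{\log}_{0}(\mathbb{R}^{3})$ with $2\leq p^{-}\leq p(\cdot)\leq p^{+}\leq 6$, and $1\leq\rho\leq\infty$. Then there exists a positive constant $C$ such that for any $u_{0}\in F\dot{B}^{2-\frac{3}{p(\cdot)}}_{p(\cdot),1}(\mathbb{R}^{3})$, \[ \|e^{t\Delta}u_{0}\|_{\mathcal{X}_{t}}\leq C\|u_{0}\|_{F\dot{B}^{2-\frac{3}{p(\cdot)}}_{p(\cdot),1}}. \]
   Context: $e^{t\Delta}$ is the Fourier multiplier $e^{-t|\xi|^2}$. Fourier transform: $\widehat f(\xi)=(2\pi)^{-3/2}\int f(x)e^{-ix\cdot\xi}dx$. Let $\chi$ be a smooth radial non-increasing function supported in $B(0,\frac43)$ with $\chi\equiv1$ on $B(0,\frac34)$; $\varphi(\xi)=\chi(\xi/2)-\chi(\xi)$, $\varphi_j(\xi)=\varphi(2^{-j}\xi)$, $S_jf=\mathcal{F}^{-1}(\chi(2^{-j}\cdot)\widehat f)$; $\mathcal{S}'_h$ is the set of tempered distributions with $S_jf\to0$ as $j\to-\infty$. Constant exponents: $\|f\|_{F\dot B^s_{p,1}}=\sum_j2^{js}\|\varphi_j\widehat f\|_{L^p}$ and $\|f\|_{\mathcal{L}^\lambda_t(F\dot B^s_{p,1})}=\sum_j2^{js}\|\varphi_j\widehat f\|_{L^\lambda(0,\infty;L^p_\xi)}$. Variable exponents: $\mathcal{P}_0$ is the set of measurable $p:\mathbb{R}^3\to[1,\infty)$ with $1<p^-:=\operatorname{ess\,inf}p$,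 $p^+:=\operatorname{ess\,sup}p<\infty$; $\|f\|_{L^{p(\cdot)}}=\inf\{\lambda>0:\int|f/\lambda|^{p(x)}dx\le1\}$; $\mathcal{P}_0^{\log}$ is the set of $p\in\mathcal{P}_0$ such that $1/p_\infty=\lim_{|x|\to\infty}1/p(x)$ exists and for some $C$, $|1/p(x)-1/p(y)|\le C/\log(e+1/|x-y|)$ and $|1/p(x)-1/p_\infty|\le C/\log(e+|x|)$. For a function $s(\cdot)$: $\|f\|_{F\dot B^{s(\cdot)}_{p(\cdot),1}}=\sum_j\|2^{js(\cdot)}\varphi_j\widehat f\|_{L^{p(\cdot)}}$ and $\|f\|_{\mathcal{L}^\rho_t(F\dot B^{s(\cdot)}_{p(\cdot),1})}=\sum_j\|2^{js(\cdot)}\varphi_j\widehat f\|_{L^\rho(0,\infty;L^{p(\cdot)}_\xi)}$, with $2^{js(\cdot)}$ the function $\xi\mapsto 2^{js(\xi)}$. The space $\mathcal{X}_t=\mathcal{L}^{\rho}(0,\infty;F\dot{B}^{2-\frac{3}{p(\cdot)}+\frac{2}{\rho}}_{p(\cdot),1})\cap\mathcal{L}^{1}(0,\infty;F\dot{B}^{\frac{5}{2}}_{2,1})\cap\mathcal{L}^{\infty}(0,\infty;F\dot{B}^{\frac{1}{2}}_{2,1})$ with norm $\|u\|_{\mathcal{X}_t}=\max\{\|u\|_{\mathcal{L}^\rho_t(F\dot B^{2-\frac{3}{p(\cdot)}+\frac2\rho}_{p(\cdot),1})},\|u\|_{\mathcal{L}^1_t(F\dot B^{\frac52}_{2,1})},\|u\|_{\mathcal{L}^\infty_t(F\dot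 B^{\frac12}_{2,1})}\}$. *)

theory Defs
  imports "HOL-Analysis.Analysis"
begin

(* C^infinity functions on R^3: differentiable everywhere, and every directional
   derivative is again C^infinity (coinductively: derivatives of all orders exist). *)
coinductive smooth3 :: "(real^3 \<Rightarrow> real) \<Rightarrow> bool" where
  "f differentiable_on UNIV \<Longrightarrow> (\<And>v. smooth3 (\<lambda>x. frechet_derivative f (at x) v))
     \<Longrightarrow> smooth3 f"

definition admissible_chi :: "(real^3 \<Rightarrow> real) \<Rightarrow> bool" where
  "admissible_chi chi \<longleftrightarrow> smooth3 chi
     \<and> (\<exists>g. antimono g \<and> (\<forall>x. chi x = g (norm x)))
     \<and> (\<forall>x. norm x \<ge> 4/3 \<longrightarrow> chi x = 0)
     \<and> (\<forall>x. norm x \<le> 3/4 \<longrightarrow> chi x = 1)"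

definition phi_j :: "(real^3 \<Rightarrow> real) \<Rightarrow> int \<Rightarrow> real^3 \<Rightarrow> real" where
  "phi_j chi j \<xi> = (let \<eta> = (2 powr (- real_of_int j)) *\<^sub>R \<xi> in chi ((1/2) *\<^sub>R \<eta>) - chi \<eta>)"

definition ess_inf_exp :: "(real^3 \<Rightarrow> real) \<Rightarrow> ereal" where
  "ess_inf_exp p = Sup {c::ereal. AE x in lborel. c \<le> ereal (p x)}"

definition ess_sup_exp :: "(real^3 \<Rightarrow> real) \<Rightarrow> ereal" where
  "ess_sup_exp p = Inf {c::ereal. AE x in lborel. ereal (p x) \<le> c}"

definition P0 :: "(real^3 \<Rightarrow> real) \<Rightarrow> bool" where
  "P0 p \<longleftrightarrow> p \<in> borel_measurable lborel \<and> (\<forall>x. 1 \<le> p x)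
     \<and> 1 < ess_inf_exp p \<and> ess_sup_exp p < \<infinity>"

definition P0_log :: "(real^3 \<Rightarrow> real) \<Rightarrow> bool" where
  "P0_log p \<longleftrightarrow> P0 p \<and> (\<exists>q C::real.
       ((\<lambda>x. 1 / p x) \<longlongrightarrow> q) at_infinity
     \<and> (\<forall>x y. \<bar>1 / p x - 1 / p y\<bar> \<le> C / ln (exp 1 + 1 / norm (x - y)))
     \<and> (\<forall>x. \<bar>1 / p x - q\<bar> \<le> C / ln (exp 1 + norm x)))"

definition enn_powr :: "ennreal \<Rightarrow> real \<Rightarrow> ennreal" where
  "enn_powr x a = (if x = top then top else ennreal (enn2real x powr a))"

definition Lvar_norm :: "(real^3 \<Rightarrow> real) \<Rightarrow> (real^3 \<Rightarrow> complex) \<Rightarrow> ennreal" where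
  "Lvar_norm p f = Inf {ennreal lam | lam. lam > 0 \<and>
      (\<integral>\<^sup>+ x. ennreal ((norm (f x) / lam) powr p x) \<partial>lborel) \<le> 1}"

definition Lp_norm :: "real \<Rightarrow> (real^3 \<Rightarrow> complex) \<Rightarrow> ennreal" where
  "Lp_norm p f = enn_powr (\<integral>\<^sup>+ x. ennreal (norm (f x) powr p) \<partial>lborel) (1 / p)"

definition Lrho_time :: "ereal \<Rightarrow> (real \<Rightarrow> ennreal) \<Rightarrow> ennreal" where
  "Lrho_time \<rho> N = (if \<rho> = \<infinity> then Inf {c. AE t in lborel. 0 < t \<longrightarrow> N t \<le> c}
     else enn_powr (\<integral>\<^sup>+ t\<in>{0<..}. enn_powr (N t) (real_of_ereal \<rho>) \<partial>lborel)
                   (1 / real_of_ereal \<rho>))"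

(* heat semigroup on the Fourier side: (e^{t Delta} u)^ = e^{-t|xi|^2} u^ *)
definition heat_hat :: "real \<Rightarrow> (real^3 \<Rightarrow> complex) \<Rightarrow> real^3 \<Rightarrow> complex" where
  "heat_hat t F \<xi> = complex_of_real (exp (- t * (norm \<xi>)\<^sup>2)) * F \<xi>"

(* Norms expressed in terms of F = Fourier transform of the function. *)

definition FB_var_norm :: "(real^3 \<Rightarrow> real) \<Rightarrow> (real^3 \<Rightarrow> real) \<Rightarrow> (real^3 \<Rightarrow> real)
     \<Rightarrow> (real^3 \<Rightarrow> complex) \<Rightarrow> ennreal" where
  "FB_var_norm chi s p F = (\<Sum>\<^sub>\<infinity> j::int.
      Lvar_norm p (\<lambda>\<xi>. complex_of_real (2 powr (real_of_int j * s \<xi>) * phi_j chi j \<xi>) * F \<xi>))"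

definition LFB_var_norm :: "(real^3 \<Rightarrow> real) \<Rightarrow> ereal \<Rightarrow> (real^3 \<Rightarrow> real) \<Rightarrow> (real^3 \<Rightarrow> real)
     \<Rightarrow> (real \<Rightarrow> real^3 \<Rightarrow> complex) \<Rightarrow> ennreal" where
  "LFB_var_norm chi \<rho> s p Fhat = (\<Sum>\<^sub>\<infinity> j::int. Lrho_time \<rho> (\<lambda>t.
      Lvar_norm p (\<lambda>\<xi>. complex_of_real (2 powr (real_of_int j * s \<xi>) * phi_j chi j \<xi>) * Fhat t \<xi>)))"

definition LFB_norm :: "(real^3 \<Rightarrow> real) \<Rightarrow> ereal \<Rightarrow> real \<Rightarrow> real
     \<Rightarrow> (real \<Rightarrow> real^3 \<Rightarrow> complex) \<Rightarrow> ennreal" where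
  "LFB_norm chi lam s p Fhat = (\<Sum>\<^sub>\<infinity> j::int. ennreal (2 powr (real_of_int j * s)) *
      Lrho_time lam (\<lambda>t. Lp_norm p (\<lambda>\<xi>. complex_of_real (phi_j chi j \<xi>) * Fhat t \<xi>)))"

definition X_norm :: "(real^3 \<Rightarrow> real) \<Rightarrow> ereal \<Rightarrow> (real^3 \<Rightarrow> real)
     \<Rightarrow> (real \<Rightarrow> real^3 \<Rightarrow> complex) \<Rightarrow> ennreal" where
  "X_norm chi \<rho> p Fhat = max (LFB_var_norm chi \<rho> (\<lambda>\<xi>. 2 - 3 / p \<xi> + real_of_ereal (2 / \<rho>)) p Fhat)
      (max (LFB_norm chi 1 (5/2) 2 Fhat) (LFB_norm chi \<infinity> (1/2) 2 Fhat))"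

end

theory Submission
  imports Defs
begin

(* On the support of phi_j we have |xi| > 3/4 * 2^j, so the heat multiplier is at most
   exp (-(9/16) 4^j t) there, and the L^rho(0,infinity) norm in time of this bound is
   O(4^(-j/rho)); this exactly absorbs the extra weight 2^(2j/rho) of the X_t norms, block by
   block.  For the two L^2-based components one embeds L^p(.) into L^2 on the support of
   phi_j, a set of measure O(2^(3j)): since p >= 2, Young's inequality gives
   a^(1-2/p) u^2 <= u^p + a pointwise, and with a = 2^(-3j) the factor a^(1/2-1/p) is
   precisely what turns the weight 2^(j(2-3/p)) into 2^(j/2). *)

lemma ennreal_le_mult_Inf:
  fixes X :: ennreal
  assumes c: "c > 0" and H: "\<And>l. P l \<Longrightarrow> X \<le> ennreal (c * l)"
  shows "X \<le> ennreal c * Inf {ennreal l | l. P l}"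
proof -
  have "X / ennreal c \<le> Inf {ennreal l | l. P l}"
  proof (rule Inf_greatest, safe)
    fix l assume "P l"
    hence "X \<le> ennreal c * ennreal l"
      using H c by (metis ennreal_mult' less_imp_le)
    thus "X / ennreal c \<le> ennreal l"
      by (simp add: divide_le_posI_ennreal c)
  qed
  hence "X / ennreal c * ennreal c \<le> Inf {ennreal l | l. P l} * ennreal c"
    by (rule mult_right_mono) simp
  moreover have "X / ennreal c * ennreal c = X"
    using c by (simp add: ennreal_divide_times)
  ultimately show ?thesis
    by (simp add: mult.commute)
qed

lemma Lvar_norm_le_cmult:
  assumes p: "\<And>x. 0 \<le> p x" and k: "k > 0"
    and hg: "\<And>\<xi>. norm (h \<xi>) \<le> k * norm (g \<xi>)"
  shows "Lvar_norm p h \<le> ennreal k * Lvar_norm p g"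
  unfolding Lvar_norm_def[of p g]
proof (rule ennreal_le_mult_Inf[OF k])
  fix l assume l: "l > 0 \<and> (\<integral>\<^sup>+ x. ennreal ((norm (g x) / l) powr p x) \<partial>lborel) \<le> 1"
  have "(\<integral>\<^sup>+ x. ennreal ((norm (h x) / (k*l)) powr p x) \<partial>lborel)
        \<le> (\<integral>\<^sup>+ x. ennreal ((norm (g x) / l) powr p x) \<partial>lborel)"
  proof (rule nn_integral_mono)
    fix x
    have "norm (h x) / (k*l) \<le> norm (g x) / l"
      using hg[of x] k l by (simp add: divide_simps mult.commute mult.left_commute)
    thus "ennreal ((norm (h x) / (k*l)) powr p x) \<le> ennreal ((norm (g x) / l) powr p x)"
      using p[of x] k l by (intro ennreal_leI powr_mono2) auto
  qed
  with l have "ennreal (k*l) \<in> {ennreal lam | lam. lam > 0 \<and>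
      (\<integral>\<^sup>+ x. ennreal ((norm (h x) / lam) powr p x) \<partial>lborel) \<le> 1}"
    using k by auto
  thus "Lvar_norm p h \<le> ennreal (k * l)"
    unfolding Lvar_norm_def by (rule Inf_lower)
qed

lemma AE_ge_of_ess_inf_exp_ge:
  assumes "ereal c \<le> ess_inf_exp p"
  shows "AE x in lborel. c \<le> p x"
proof -
  have "AE x in lborel. ereal (c - 1 / Suc n) \<le> ereal (p x)" for n :: nat
  proof -
    have "ereal (c - 1 / Suc n) < Sup {c::ereal. AE x in lborel. c \<le> ereal (p x)}"
      using assms unfolding ess_inf_exp_def by (rule less_le_trans[rotated]) simp
    then obtain d where "AE x in lborel. d \<le> ereal (p x)" "ereal (c - 1 / Suc n) < d"
      by (auto simp: less_Sup_iff)
    thus ?thesis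
      by (auto elim!: eventually_mono dest: order.strict_trans2 simp del: ereal_less_eq)
  qed
  hence "AE x in lborel. \<forall>n::nat. c - 1 / Suc n \<le> p x"
    by (simp add: AE_all_countable)
  thus ?thesis
  proof (rule eventually_mono)
    fix x assume approx: "\<forall>n::nat. c - 1 / Suc n \<le> p x"
    show "c \<le> p x"
    proof (rule ccontr)
      assume "\<not> c \<le> p x"
      then obtain n :: nat where "1 / Suc n < c - p x"
        using nat_approx_posE by (metis diff_gt_0_iff_gt linorder_not_le)
      with approx show False by (smt (verit))
    qed
  qed
qed

lemma powr_mult_square_le_powr_add:
  fixes a u p :: real
  assumes a: "a > 0" and u: "u \<ge> 0" and p: "p \<ge> 2"
  shows "a powr (1 - 2/p) * u\<^sup>2 \<le> u powr p + a"
proof (cases "u \<le> a powr (1/p)")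
  case True
  have "u\<^sup>2 \<le> (a powr (1/p))\<^sup>2"
    using True u by (intro power_mono) auto
  also have "\<dots> = (a powr (1/p)) powr 2"
    by simp
  also have "\<dots> = a powr (2/p)"
    by (simp add: powr_powr)
  finally have "a powr (1 - 2/p) * u\<^sup>2 \<le> a powr (1 - 2/p) * a powr (2/p)"
    by (intro mult_left_mono) auto
  also have "\<dots> = a"
    using a by (simp flip: powr_add)
  finally show ?thesis
    using u by (smt (verit) powr_ge_zero)
next
  case False
  hence u0: "u > 0"
    using a by (smt (verit) powr_gt_zero)
  have "a powr (1 - 2/p) = (a powr (1/p)) powr (p - 2)"
    using p a by (simp add: powr_powr diff_divide_distrib)
  also have "\<dots> \<le> u powr (p - 2)"
    using False p by (intro powr_mono2) auto
  finally have "a powr (1 - 2/p) * u\<^sup>2 \<le> u powr (p - 2) * u\<^sup>2"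
    by (intro mult_right_mono) auto
  also have "\<dots> = u powr (p - 2) * u powr 2"
    using u0 by simp
  also have "\<dots> = u powr p"
    using u0 powr_add[of u "p - 2" 2] by simp
  finally show ?thesis
    using a by simp
qed

lemma square_le_scaled_powr_add:
  fixes a k l q y z :: real
  assumes a: "a > 0" and l: "l > 0" and q: "q \<ge> 2" and y: "0 \<le> y" and z: "0 \<le> z"
    and yz: "y \<le> k * a powr (1/2 - 1/q) * z"
  shows "y\<^sup>2 \<le> (k*l)\<^sup>2 * ((z/l) powr q + a)"
proof -
  have "y\<^sup>2 \<le> (k * a powr (1/2 - 1/q) * z)\<^sup>2"
    using y yz by (intro power_mono)
  also have "\<dots> = (k*l)\<^sup>2 * ((a powr (1/2 - 1/q)) powr 2 * (z/l)\<^sup>2)"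
    using l by (simp add: power_mult_distrib power_divide)
  also have "(a powr (1/2 - 1/q)) powr 2 = a powr (1 - 2/q)"
    by (simp add: powr_powr algebra_simps)
  also have "a powr (1 - 2/q) * (z/l)\<^sup>2 \<le> (z/l) powr q + a"
    using a l z q by (intro powr_mult_square_le_powr_add) auto
  finally show ?thesis
    by (simp add: mult_left_mono)
qed

lemma enn_powr_le_ennreal_powr:
  assumes "x \<le> ennreal y" "y \<ge> 0" "a \<ge> 0"
  shows "enn_powr x a \<le> ennreal (y powr a)"
proof -
  have "x \<noteq> top"
    using assms(1) by (metis ennreal_neq_top top.extremum_unique)
  moreover have "enn2real x \<le> y"
    using assms(1,2) enn2real_mono[of x "ennreal y"] by simp
  ultimately show ?thesis
    unfolding enn_powr_def using assms(3) by (simp add: ennreal_leI powr_mono2)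
qed

lemma nn_integral_norm_square_le_finite_support:
  fixes p :: "real^3 \<Rightarrow> real" and g h :: "real^3 \<Rightarrow> complex"
  assumes p_meas: "p \<in> borel_measurable lborel" and p_ge_2: "AE \<xi> in lborel. 2 \<le> p \<xi>"
    and g_meas: "g \<in> borel_measurable lborel"
    and a: "a > 0" and hg: "\<And>\<xi>. norm (h \<xi>) \<le> k * a powr (1/2 - 1/p \<xi>) * norm (g \<xi>)"
    and supp: "\<And>\<xi>. g \<xi> \<noteq> 0 \<Longrightarrow> \<xi> \<in> A" and A: "A \<in> sets lborel"
    and m: "m \<ge> 0" "emeasure lborel A \<le> ennreal m"
    and l: "l > 0" and modular: "(\<integral>\<^sup>+ x. ennreal ((norm (g x) / l) powr p x) \<partial>lborel) \<le> 1"
  shows "(\<integral>\<^sup>+ x. ennreal (norm (h x) powr 2) \<partial>lborel) \<le> ennreal ((k*l)\<^sup>2 * (1 + a * m))"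
proof -
  define u where "u x = (norm (g x) / l) powr p x" for x
  have u_meas: "u \<in> borel_measurable lborel"
    unfolding u_def[abs_def] using g_meas p_meas by measurable
  have pointwise: "AE x in lborel. ennreal (norm (h x) powr 2)
                     \<le> ennreal ((k*l)\<^sup>2 * (u x + a * indicator A x))"
    using p_ge_2
  proof (rule eventually_mono)
    fix x assume px: "2 \<le> p x"
    show "ennreal (norm (h x) powr 2) \<le> ennreal ((k*l)\<^sup>2 * (u x + a * indicator A x))"
      using square_le_scaled_powr_add[OF a l px norm_ge_zero norm_ge_zero hg] hg[of x] supp[of x] a
      by (cases "g x = 0") (auto simp: u_def intro: ennreal_leI)
  qed
  have "(\<integral>\<^sup>+ x. ennreal (norm (h x) powr 2) \<partial>lborel)
        \<le> (\<integral>\<^sup>+ x. ennreal ((k*l)\<^sup>2) * (ennreal (u x) + ennreal a * indicator A x) \<partial>lborel)"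
    using nn_integral_mono_AE[OF pointwise] a
    by (simp add: ennreal_mult' ennreal_plus[symmetric] ennreal_indicator u_def)
  also have "\<dots> = ennreal ((k*l)\<^sup>2) * ((\<integral>\<^sup>+ x. ennreal (u x) \<partial>lborel) + ennreal a * emeasure lborel A)"
    using u_meas A by (simp add: nn_integral_cmult nn_integral_add nn_integral_cmult_indicator)
  also have "\<dots> \<le> ennreal ((k*l)\<^sup>2) * (1 + ennreal (a * m))"
    using modular a m by (intro mult_left_mono add_mono) (auto simp: u_def ennreal_mult mult_left_mono)
  also have "\<dots> = ennreal ((k*l)\<^sup>2 * (1 + a * m))"
    using a m by (simp add: ennreal_mult')
  finally show ?thesis .
qed

lemma Lp_norm_2_le_Lvar_norm_finite_support:
  fixes p :: "real^3 \<Rightarrow> real" and g h :: "real^3 \<Rightarrow> complex"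
  assumes "p \<in> borel_measurable lborel" "AE \<xi> in lborel. 2 \<le> p \<xi>" "g \<in> borel_measurable lborel"
    and a: "a > 0" and k: "k > 0"
    and "\<And>\<xi>. norm (h \<xi>) \<le> k * a powr (1/2 - 1/p \<xi>) * norm (g \<xi>)"
    and "\<And>\<xi>. g \<xi> \<noteq> 0 \<Longrightarrow> \<xi> \<in> A" "A \<in> sets lborel"
    and m: "m \<ge> 0" "emeasure lborel A \<le> ennreal m"
  shows "Lp_norm 2 h \<le> ennreal (k * sqrt (1 + a * m)) * Lvar_norm p g"
  unfolding Lvar_norm_def[of p g]
proof (rule ennreal_le_mult_Inf)
  show "k * sqrt (1 + a * m) > 0"
    using k a m by (simp add: add_pos_nonneg)
  fix l assume l: "l > 0 \<and> (\<integral>\<^sup>+ x. ennreal ((norm (g x) / l) powr p x) \<partial>lborel) \<le> 1"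
  hence "Lp_norm 2 h \<le> ennreal (((k*l)\<^sup>2 * (1 + a * m)) powr (1/2))"
    unfolding Lp_norm_def using assms
    by (intro enn_powr_le_ennreal_powr nn_integral_norm_square_le_finite_support) auto
  also have "((k*l)\<^sup>2 * (1 + a * m)) powr (1/2) = k * sqrt (1 + a * m) * l"
    using a m k l by (simp add: powr_half_sqrt real_sqrt_mult)
  finally show "Lp_norm 2 h \<le> ennreal (k * sqrt (1 + a * m) * l)" .
qed

lemma mult_powr_neg_inverse_le:
  fixes c r :: real
  assumes c: "0 < c" "c \<le> 1" and r: "1 \<le> r"
  shows "(c * r) powr (- 1/r) \<le> 1 / c"
proof -
  have "(c * r) powr (- 1/r) = c powr (- 1/r) * r powr (- 1/r)"
    using c r by (simp add: powr_mult)
  also have "\<dots> \<le> c powr (- 1/r)"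
    using c r by (intro mult_left_le) (auto simp: powr_le_one_le powr_minus_divide ge_one_powr_ge_zero)
  also have "\<dots> \<le> c powr (- 1)"
    using c r by (intro powr_mono') (auto simp: field_simps)
  finally show ?thesis
    using c by (simp add: powr_minus_divide)
qed

lemma Lrho_time_infinity_le:
  assumes "\<And>t. t > 0 \<Longrightarrow> M t \<le> b"
  shows "Lrho_time \<infinity> M \<le> b"
  unfolding Lrho_time_def using assms by (simp add: Inf_lower)

lemma Lrho_time_ereal_le_exp_decay:
  fixes M :: "real \<Rightarrow> ennreal"
  assumes r: "1 \<le> r" and q: "0 < q" and b: "0 \<le> b"
    and M: "\<And>t. t > 0 \<Longrightarrow> M t \<le> ennreal (exp (- q * t) * b)"
  shows "Lrho_time (ereal r) M \<le> ennreal (b * (q * r) powr (- 1/r))"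
proof -
  have qr: "q * r > 0"
    using q r by simp
  have "(\<integral>\<^sup>+ t\<in>{0<..}. enn_powr (M t) r \<partial>lborel)
        \<le> (\<integral>\<^sup>+ t. ennreal (b powr r * exp (- (q * r) * t)) * indicator {0..} t \<partial>lborel)"
  proof (rule nn_integral_mono)
    fix t :: real
    show "enn_powr (M t) r * indicator {0<..} t
            \<le> ennreal (b powr r * exp (- (q * r) * t)) * indicator {0..} t"
    proof (cases "t > 0")
      case True
      have "enn_powr (M t) r \<le> ennreal ((exp (- q * t) * b) powr r)"
        using M[OF True] b r by (intro enn_powr_le_ennreal_powr) auto
      also have "(exp (- q * t) * b) powr r = b powr r * exp (- (q * r) * t)"
        using b by (simp add: powr_mult exp_powr_real algebra_simps)
      finally show ?thesis
        using True by simp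
    qed simp
  qed
  also have "\<dots> = ennreal (b powr r * (exp (- (q * r) * 0) / (q * r)))"
    using qr by (intro nn_integral_has_integral_lebesgue' has_integral_mult_right
        has_integral_exp_minus_to_infinity) auto
  finally have "Lrho_time (ereal r) M \<le> ennreal ((b powr r / (q * r)) powr (1/r))"
    unfolding Lrho_time_def using r qr b by (simp add: enn_powr_le_ennreal_powr)
  also have "(b powr r / (q * r)) powr (1/r) = b * (q * r) powr (- 1/r)"
    using b r qr by (simp add: powr_divide powr_powr powr_minus_divide)
  finally show ?thesis .
qed

lemma Lrho_time_le_exp_decay:
  fixes M :: "real \<Rightarrow> ennreal" and \<rho> :: ereal
  assumes \<rho>: "1 \<le> \<rho>" and c: "0 < c" "c \<le> 1" and \<mu>: "0 < \<mu>"
    and M: "\<And>t. t > 0 \<Longrightarrow> M t \<le> ennreal (exp (- c * \<mu> * t)) * B"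
  shows "Lrho_time \<rho> M \<le> ennreal (\<mu> powr (- real_of_ereal (1/\<rho>)) / c) * B"
proof (cases B)
  case top
  thus ?thesis
    using c \<mu> by (simp add: ennreal_mult_top)
next
  case (real b)
  hence b: "b \<ge> 0"
    by simp
  have M': "M t \<le> ennreal (exp (- (c * \<mu>) * t) * b)" if "t > 0" for t
    using M[OF that] real b by (simp add: ennreal_mult)
  show ?thesis
  proof (cases \<rho>)
    case PInf
    have "Lrho_time \<rho> M \<le> ennreal b"
      unfolding PInf using b c \<mu>
      by (intro Lrho_time_infinity_le order_trans[OF M'] ennreal_leI mult_left_le_one_le) auto
    also have "\<dots> \<le> ennreal (\<mu> powr (- real_of_ereal (1/\<rho>)) / c) * B"
      using PInf real b c \<mu> by (simp add: ennreal_mult[symmetric] ennreal_leI field_simps mult_left_le)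
    finally show ?thesis .
  next
    case (real r)
    hence r: "r \<ge> 1"
      using \<rho> by simp
    have "Lrho_time \<rho> M \<le> ennreal (b * (c * \<mu> * r) powr (- 1/r))"
      unfolding real using c \<mu> b M' by (intro Lrho_time_ereal_le_exp_decay[OF r]) auto
    moreover have "b * (c * \<mu> * r) powr (- 1/r) = b * \<mu> powr (- 1/r) * (c * r) powr (- 1/r)"
      using c \<mu> r by (simp add: powr_mult)
    moreover have "\<dots> \<le> b * \<mu> powr (- 1/r) * (1 / c)"
      using mult_powr_neg_inverse_le[OF c r] b by (intro mult_left_mono) auto
    moreover have "\<dots> = \<mu> powr (- real_of_ereal (1/\<rho>)) / c * b"
      using real r by (simp add: one_ereal_def)
    ultimately show ?thesis
      using \<open>B = ennreal b\<close> b c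
      by (metis ennreal_leI ennreal_mult' order_trans powr_ge_zero divide_nonneg_pos)
  qed (use \<rho> in simp)
qed

lemma infsum_cmult_le_ennreal:
  fixes f :: "'a \<Rightarrow> ennreal"
  shows "(\<Sum>\<^sub>\<infinity> j. c * f j) \<le> c * (\<Sum>\<^sub>\<infinity> j. f j)"
proof -
  have "(\<Sum>\<^sub>\<infinity> j. c * f j) = (SUP F\<in>{F. finite F \<and> F \<subseteq> UNIV}. sum (\<lambda>j. c * f j) F)"
    by (rule nonneg_infsum_complete) simp
  also have "\<dots> \<le> c * (\<Sum>\<^sub>\<infinity> j. f j)"
  proof (rule SUP_least)
    fix F :: "'a set" assume F: "F \<in> {F. finite F \<and> F \<subseteq> UNIV}"
    have "sum f F = infsum f F"
      using F by simp
    also have "\<dots> \<le> infsum f UNIV"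
      by (rule infsum_mono_neutral) (auto simp: nonneg_summable_on_complete)
    finally have "c * sum f F \<le> c * infsum f UNIV"
      by (rule mult_left_mono) simp
    thus "sum (\<lambda>j. c * f j) F \<le> c * (\<Sum>\<^sub>\<infinity> j. f j)"
      by (simp add: sum_distrib_left)
  qed
  finally show ?thesis .
qed

lemma admissible_chi_borel_measurable:
  assumes "admissible_chi chi"
  shows "chi \<in> borel_measurable borel"
proof -
  have "smooth3 chi"
    using assms by (simp add: admissible_chi_def)
  hence "chi differentiable_on UNIV"
    by (cases rule: smooth3.cases) auto
  thus ?thesis
    by (intro borel_measurable_continuous_onI differentiable_imp_continuous_on)
qed

lemma phi_j_borel_measurable:
  assumes "admissible_chi chi"
  shows "phi_j chi j \<in> borel_measurable lborel"
proof -
  note [measurable] = admissible_chi_borel_measurable[OF assms]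
  show ?thesis
    unfolding phi_j_def[abs_def] Let_def by measurable
qed

lemma phi_j_nonzero_imp_annulus:
  assumes chi: "admissible_chi chi" and nz: "phi_j chi j \<xi> \<noteq> 0"
  shows "3/4 * 2 powr j < norm \<xi> \<and> norm \<xi> < 8/3 * 2 powr j"
proof -
  define \<eta> where "\<eta> = (2 powr (- real_of_int j)) *\<^sub>R \<xi>"
  have nz': "chi ((1/2) *\<^sub>R \<eta>) \<noteq> chi \<eta>"
    using nz by (simp add: phi_j_def \<eta>_def Let_def)
  have chi0: "chi x = 0" if "norm x \<ge> 4/3" for x
    using chi that by (simp add: admissible_chi_def)
  have chi1: "chi x = 1" if "norm x \<le> 3/4" for x
    using chi that by (simp add: admissible_chi_def)
  have half: "norm ((1/2) *\<^sub>R \<eta>) = norm \<eta> / 2"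
    by simp
  have "3/4 < norm \<eta>"
  proof (rule ccontr)
    assume "\<not> 3/4 < norm \<eta>"
    hence "chi \<eta> = 1" "chi ((1/2) *\<^sub>R \<eta>) = 1"
      using chi1 half by auto
    with nz' show False by simp
  qed
  moreover have "norm \<eta> < 8/3"
  proof (rule ccontr)
    assume "\<not> norm \<eta> < 8/3"
    hence "chi \<eta> = 0" "chi ((1/2) *\<^sub>R \<eta>) = 0"
      using chi0 half by auto
    with nz' show False by simp
  qed
  moreover have "norm \<xi> = 2 powr j * norm \<eta>"
    by (simp add: \<eta>_def powr_minus)
  ultimately show ?thesis
    by simp
qed

lemma phi_j_nonzero_imp_mem_cube:
  assumes "admissible_chi chi" and "phi_j chi j \<xi> \<noteq> 0"
  shows "\<xi> \<in> cbox (- (\<chi> i. 8/3 * 2 powr j)) (\<chi> i. 8/3 * 2 powr j)"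
proof -
  have "norm \<xi> < 8/3 * 2 powr j"
    using phi_j_nonzero_imp_annulus[OF assms] by simp
  hence "\<bar>\<xi> $ i\<bar> \<le> 8/3 * 2 powr j" for i
    using component_le_norm_cart[of \<xi> i] by simp
  hence "- (8/3 * 2 powr j) \<le> \<xi> $ i \<and> \<xi> $ i \<le> 8/3 * 2 powr j" for i
    by (meson abs_le_D1 abs_le_D2 minus_le_iff)
  thus ?thesis
    by (simp add: mem_box_cart)
qed

lemma emeasure_lborel_cube_cart:
  fixes R :: real
  assumes "0 \<le> R"
  shows "emeasure lborel (cbox (- (\<chi> i::'n::finite. R)) (\<chi> i. R)) = ennreal ((2*R) ^ CARD('n))"
proof -
  have "(\<chi> i. R) \<in> cbox (- (\<chi> i::'n. R)) (\<chi> i. R)"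
    using assms by (simp add: mem_box_cart)
  hence "cbox (- (\<chi> i::'n. R)) (\<chi> i. R) \<noteq> {}"
    by blast
  hence "measure lborel (cbox (- (\<chi> i::'n. R)) (\<chi> i. R)) = (2*R) ^ CARD('n)"
    by (simp add: content_cbox_cart)
  moreover have "emeasure lborel (cbox (- (\<chi> i::'n. R)) (\<chi> i. R)) \<noteq> top"
    using emeasure_lborel_cbox_finite by (simp add: less_top)
  ultimately show ?thesis
    by (simp add: emeasure_eq_ennreal_measure)
qed

lemma heat_symbol_le_on_phi_j_support:
  assumes chi: "admissible_chi chi" and t: "t \<ge> 0"
  shows "exp (- t * (norm \<xi>)\<^sup>2) * \<bar>phi_j chi j \<xi>\<bar>
           \<le> exp (- (9/16) * 2 powr (2 * real_of_int j) * t) * \<bar>phi_j chi j \<xi>\<bar>"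
proof (cases "phi_j chi j \<xi> = 0")
  case False
  have "9/16 * 2 powr (2 * real_of_int j) = (3/4 * 2 powr j)\<^sup>2"
    by (simp add: power2_eq_square powr_add[symmetric])
  also have "\<dots> \<le> (norm \<xi>)\<^sup>2"
    using phi_j_nonzero_imp_annulus[OF chi False] by (intro power_mono) auto
  finally have "9/16 * 2 powr (2 * real_of_int j) * t \<le> (norm \<xi>)\<^sup>2 * t"
    using t by (rule mult_right_mono)
  hence "exp (- t * (norm \<xi>)\<^sup>2) \<le> exp (- (9/16) * 2 powr (2 * real_of_int j) * t)"
    by (simp add: algebra_simps)
  thus ?thesis
    by (rule mult_right_mono) simp
qed simp

lemma dyadic_time_weight:
  "(2 powr (2 * real_of_int j)) powr (- real_of_ereal (1/\<rho>)) = 2 powr (- j * real_of_ereal (2/\<rho>))"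
proof (cases \<rho>)
  case (real r)
  thus ?thesis
    by (simp add: powr_powr one_ereal_def mult.commute)
qed simp_all

definition FB_block :: "(real^3 \<Rightarrow> real) \<Rightarrow> (real^3 \<Rightarrow> real) \<Rightarrow> (real^3 \<Rightarrow> complex)
    \<Rightarrow> int \<Rightarrow> real^3 \<Rightarrow> complex" where
  "FB_block chi s F j \<xi> = complex_of_real (2 powr (real_of_int j * s \<xi>) * phi_j chi j \<xi>) * F \<xi>"

lemma FB_var_norm_eq_infsum_blocks:
  "FB_var_norm chi s p F = (\<Sum>\<^sub>\<infinity> j. Lvar_norm p (FB_block chi s F j))"
  unfolding FB_var_norm_def FB_block_def[abs_def] ..

lemma LFB_var_norm_eq_infsum_blocks:
  "LFB_var_norm chi \<rho> s p Fhat = (\<Sum>\<^sub>\<infinity> j. Lrho_time \<rho> (\<lambda>t. Lvar_norm p (FB_block chi s (Fhat t) j)))"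
  unfolding LFB_var_norm_def FB_block_def[abs_def] ..

lemma Lvar_norm_heat_block_le:
  assumes chi: "admissible_chi chi" and p: "\<And>x. 0 \<le> p x" and t: "t \<ge> 0"
  shows "Lvar_norm p (FB_block chi (\<lambda>\<xi>. s \<xi> + d) (heat_hat t F) j)
    \<le> ennreal (exp (- (9/16) * 2 powr (2 * real_of_int j) * t) * 2 powr (j * d))
        * Lvar_norm p (FB_block chi s F j)"
proof (rule Lvar_norm_le_cmult[OF p])
  define E where "E = exp (- (9/16) * 2 powr (2 * real_of_int j) * t)"
  show "0 < exp (- (9/16) * 2 powr (2 * real_of_int j) * t) * 2 powr (j * d)"
    by simp
  fix \<xi>
  have "norm (FB_block chi (\<lambda>\<xi>. s \<xi> + d) (heat_hat t F) j \<xi>)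
        = 2 powr (j * s \<xi>) * 2 powr (j * d) * norm (F \<xi>) * (exp (- t * (norm \<xi>)\<^sup>2) * \<bar>phi_j chi j \<xi>\<bar>)"
    by (simp add: FB_block_def heat_hat_def norm_mult abs_mult distrib_left powr_add)
  also have "\<dots> \<le> 2 powr (j * s \<xi>) * 2 powr (j * d) * norm (F \<xi>) * (E * \<bar>phi_j chi j \<xi>\<bar>)"
    unfolding E_def using heat_symbol_le_on_phi_j_support[OF chi t] by (intro mult_left_mono) auto
  also have "\<dots> = E * 2 powr (j * d) * norm (FB_block chi s F j \<xi>)"
    by (simp add: FB_block_def norm_mult abs_mult)
  finally show "norm (FB_block chi (\<lambda>\<xi>. s \<xi> + d) (heat_hat t F) j \<xi>)
      \<le> exp (- (9/16) * 2 powr (2 * real_of_int j) * t) * 2 powr (j * d) * norm (FB_block chi s F j \<xi>)"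
    unfolding E_def .
qed

lemma Lrho_time_Lvar_norm_heat_block_le:
  assumes chi: "admissible_chi chi" and p: "\<And>x. 0 \<le> p x" and \<rho>: "1 \<le> \<rho>"
  shows "Lrho_time \<rho> (\<lambda>t. Lvar_norm p (FB_block chi (\<lambda>\<xi>. s \<xi> + real_of_ereal (2/\<rho>)) (heat_hat t F) j))
           \<le> ennreal (16/9) * Lvar_norm p (FB_block chi s F j)"
proof -
  define d where "d = real_of_ereal (2/\<rho>)"
  have "Lrho_time \<rho> (\<lambda>t. Lvar_norm p (FB_block chi (\<lambda>\<xi>. s \<xi> + d) (heat_hat t F) j))
          \<le> ennreal ((2 powr (2 * real_of_int j)) powr (- real_of_ereal (1/\<rho>)) / (9/16))
              * (ennreal (2 powr (j * d)) * Lvar_norm p (FB_block chi s F j))"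
    using Lvar_norm_heat_block_le[OF chi p]
    by (intro Lrho_time_le_exp_decay[OF \<rho>]) (simp_all add: ennreal_mult mult.assoc)
  also have "\<dots> = ennreal ((2 powr (2 * real_of_int j)) powr (- real_of_ereal (1/\<rho>)) / (9/16)
                       * 2 powr (j * d)) * Lvar_norm p (FB_block chi s F j)"
    by (subst ennreal_mult) (simp_all add: mult.assoc)
  also have "(2 powr (2 * real_of_int j)) powr (- real_of_ereal (1/\<rho>)) / (9/16) * 2 powr (j * d) = 16/9"
    unfolding dyadic_time_weight d_def by (simp add: powr_minus field_simps)
  finally show ?thesis
    unfolding d_def .
qed

lemma LFB_var_norm_heat_le:
  assumes "admissible_chi chi" "\<And>x. 0 \<le> p x" "1 \<le> \<rho>"
  shows "LFB_var_norm chi \<rho> (\<lambda>\<xi>. s \<xi> + real_of_ereal (2/\<rho>)) p (\<lambda>t. heat_hat t F)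
           \<le> ennreal (16/9) * FB_var_norm chi s p F"
proof -
  have "LFB_var_norm chi \<rho> (\<lambda>\<xi>. s \<xi> + real_of_ereal (2/\<rho>)) p (\<lambda>t. heat_hat t F)
          \<le> (\<Sum>\<^sub>\<infinity> j. ennreal (16/9) * Lvar_norm p (FB_block chi s F j))"
    unfolding LFB_var_norm_eq_infsum_blocks
    by (intro infsum_mono Lrho_time_Lvar_norm_heat_block_le[OF assms] nonneg_summable_on_complete) auto
  also have "\<dots> \<le> ennreal (16/9) * FB_var_norm chi s p F"
    unfolding FB_var_norm_eq_infsum_blocks by (rule infsum_cmult_le_ennreal)
  finally show ?thesis .
qed

lemma norm_phi_j_heat_le_FB_block:
  assumes chi: "admissible_chi chi" and t: "t \<ge> 0"
  shows "norm (complex_of_real (phi_j chi j \<xi>) * heat_hat t F \<xi>)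
    \<le> exp (- (9/16) * 2 powr (2 * real_of_int j) * t) * 2 powr (- real_of_int j / 2)
        * (2 powr (- 3 * real_of_int j)) powr (1/2 - 1/p \<xi>)
        * norm (FB_block chi (\<lambda>\<xi>. 2 - 3 / p \<xi>) F j \<xi>)"
proof -
  define E where "E = exp (- (9/16) * 2 powr (2 * real_of_int j) * t)"
  define w where "w = 2 powr (- real_of_int j / 2) * (2 powr (- 3 * real_of_int j)) powr (1/2 - 1/p \<xi>)"
  have weight: "w * 2 powr (j * (2 - 3 / p \<xi>)) = 1"
    unfolding w_def by (simp add: powr_powr powr_add[symmetric] algebra_simps)
  have "norm (complex_of_real (phi_j chi j \<xi>) * heat_hat t F \<xi>)
        = norm (F \<xi>) * (exp (- t * (norm \<xi>)\<^sup>2) * \<bar>phi_j chi j \<xi>\<bar>)"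
    by (simp add: heat_hat_def norm_mult)
  also have "\<dots> \<le> norm (F \<xi>) * (E * \<bar>phi_j chi j \<xi>\<bar>)"
    unfolding E_def using heat_symbol_le_on_phi_j_support[OF chi t] by (intro mult_left_mono) auto
  also have "\<dots> = E * (w * 2 powr (j * (2 - 3 / p \<xi>))) * \<bar>phi_j chi j \<xi>\<bar> * norm (F \<xi>)"
    unfolding weight by simp
  also have "\<dots> = E * w * norm (FB_block chi (\<lambda>\<xi>. 2 - 3 / p \<xi>) F j \<xi>)"
    by (simp add: FB_block_def norm_mult abs_mult)
  finally show ?thesis
    unfolding E_def w_def by (simp add: mult.assoc)
qed

lemma Lp_norm_2_heat_block_le:
  fixes p :: "real^3 \<Rightarrow> real"
  assumes chi: "admissible_chi chi" and p_meas: "p \<in> borel_measurable lborel"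
    and p_ge_2: "AE \<xi> in lborel. 2 \<le> p \<xi>" and F_meas: "F \<in> borel_measurable lborel"
    and t: "t \<ge> 0"
  shows "Lp_norm 2 (\<lambda>\<xi>. complex_of_real (phi_j chi j \<xi>) * heat_hat t F \<xi>)
    \<le> ennreal (exp (- (9/16) * 2 powr (2 * real_of_int j) * t) * 2 powr (- real_of_int j / 2)
                * sqrt (1 + (16/3)^3))
        * Lvar_norm p (FB_block chi (\<lambda>\<xi>. 2 - 3 / p \<xi>) F j)"
proof -
  note [measurable] = p_meas F_meas phi_j_borel_measurable[OF chi]
  define R where "R = 8/3 * 2 powr j"
  have cube_weight: "2 powr (- 3 * real_of_int j) * (2*R)^3 = (16/3)^3"
  proof -
    have "(2 powr j)^3 = 2 powr (3*j)"
      by (simp add: powr_powr mult.commute flip: powr_realpow)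
    moreover have "(2*R)^3 = (16/3)^3 * (2 powr j)^3"
      unfolding R_def by (simp add: power3_eq_cube)
    ultimately show ?thesis
      by (simp add: powr_add[symmetric])
  qed
  have "FB_block chi (\<lambda>\<xi>. 2 - 3 / p \<xi>) F j \<in> borel_measurable lborel"
    unfolding FB_block_def[abs_def] by measurable
  hence "Lp_norm 2 (\<lambda>\<xi>. complex_of_real (phi_j chi j \<xi>) * heat_hat t F \<xi>)
      \<le> ennreal (exp (- (9/16) * 2 powr (2 * real_of_int j) * t) * 2 powr (- real_of_int j / 2)
                  * sqrt (1 + 2 powr (- 3 * real_of_int j) * (2*R)^3))
          * Lvar_norm p (FB_block chi (\<lambda>\<xi>. 2 - 3 / p \<xi>) F j)"
    using emeasure_lborel_cube_cart[of R, where 'n = 3] phi_j_nonzero_imp_mem_cube[OF chi]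
    by (intro Lp_norm_2_le_Lvar_norm_finite_support[where A = "cbox (- (\<chi> i. R)) (\<chi> i. R)"
          and m = "(2*R)^3", OF p_meas p_ge_2 _ _ _
          norm_phi_j_heat_le_FB_block[OF chi t, where j = j and F = F and p = p]])
      (auto simp: R_def FB_block_def)
  thus ?thesis
    unfolding cube_weight .
qed

lemma Lrho_time_Lp_norm_2_heat_block_le:
  fixes p :: "real^3 \<Rightarrow> real" and \<sigma> :: ereal
  assumes "admissible_chi chi" "p \<in> borel_measurable lborel" "AE \<xi> in lborel. 2 \<le> p \<xi>"
    "F \<in> borel_measurable lborel" and \<sigma>: "1 \<le> \<sigma>"
  shows "ennreal (2 powr (real_of_int j * (1/2 + real_of_ereal (2/\<sigma>))))
           * Lrho_time \<sigma> (\<lambda>t. Lp_norm 2 (\<lambda>\<xi>. complex_of_real (phi_j chi j \<xi>) * heat_hat t F \<xi>))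
         \<le> ennreal (16/9 * sqrt (1 + (16/3)^3)) * Lvar_norm p (FB_block chi (\<lambda>\<xi>. 2 - 3 / p \<xi>) F j)"
proof -
  define S where "S = sqrt (1 + (16/3)^3 :: real)"
  define W where "W = 2 powr (real_of_int j * (1/2 + real_of_ereal (2/\<sigma>)))"
  define w where "w = (2 powr (2 * real_of_int j)) powr (- real_of_ereal (1/\<sigma>)) / (9/16)"
  define N where "N = Lvar_norm p (FB_block chi (\<lambda>\<xi>. 2 - 3 / p \<xi>) F j)"
  have nonneg: "0 \<le> W" "0 \<le> w" "0 \<le> S"
    by (simp_all add: W_def w_def S_def)
  have weight: "W * w * 2 powr (- real_of_int j / 2) = 16/9"
  proof -
    have "W = 2 powr (real_of_int j / 2) * 2 powr (real_of_int j * real_of_ereal (2/\<sigma>))"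
      unfolding W_def by (simp add: distrib_left flip: powr_add)
    thus ?thesis
      unfolding w_def dyadic_time_weight by (simp add: powr_minus field_simps)
  qed
  have "Lrho_time \<sigma> (\<lambda>t. Lp_norm 2 (\<lambda>\<xi>. complex_of_real (phi_j chi j \<xi>) * heat_hat t F \<xi>))
          \<le> ennreal w * (ennreal (2 powr (- real_of_int j / 2) * S) * N)"
    unfolding w_def N_def S_def using Lp_norm_2_heat_block_le[OF assms(1-4)]
    by (intro Lrho_time_le_exp_decay[OF \<sigma>]) (simp_all add: ennreal_mult mult.assoc)
  hence "ennreal W * Lrho_time \<sigma> (\<lambda>t. Lp_norm 2 (\<lambda>\<xi>. complex_of_real (phi_j chi j \<xi>) * heat_hat t F \<xi>))
          \<le> ennreal W * (ennreal w * (ennreal (2 powr (- real_of_int j / 2) * S) * N))"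
    by (rule mult_left_mono) simp
  also have "\<dots> = ennreal (W * w * 2 powr (- real_of_int j / 2) * S) * N"
    using nonneg by (simp add: ennreal_mult mult.assoc)
  also note weight
  finally show ?thesis
    unfolding W_def N_def S_def by (simp add: mult.assoc)
qed

lemma LFB_norm_2_heat_le:
  fixes p :: "real^3 \<Rightarrow> real" and \<sigma> :: ereal
  assumes "admissible_chi chi" "p \<in> borel_measurable lborel" "AE \<xi> in lborel. 2 \<le> p \<xi>"
    "F \<in> borel_measurable lborel" "1 \<le> \<sigma>"
  shows "LFB_norm chi \<sigma> (1/2 + real_of_ereal (2/\<sigma>)) 2 (\<lambda>t. heat_hat t F)
           \<le> ennreal (16/9 * sqrt (1 + (16/3)^3)) * FB_var_norm chi (\<lambda>\<xi>. 2 - 3 / p \<xi>) p F"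
proof -
  have "LFB_norm chi \<sigma> (1/2 + real_of_ereal (2/\<sigma>)) 2 (\<lambda>t. heat_hat t F)
          \<le> (\<Sum>\<^sub>\<infinity> j. ennreal (16/9 * sqrt (1 + (16/3)^3)) * Lvar_norm p (FB_block chi (\<lambda>\<xi>. 2 - 3 / p \<xi>) F j))"
    unfolding LFB_norm_def
    by (intro infsum_mono Lrho_time_Lp_norm_2_heat_block_le[OF assms] nonneg_summable_on_complete) auto
  also have "\<dots> \<le> ennreal (16/9 * sqrt (1 + (16/3)^3)) * FB_var_norm chi (\<lambda>\<xi>. 2 - 3 / p \<xi>) p F"
    unfolding FB_var_norm_eq_infsum_blocks by (rule infsum_cmult_le_ennreal)
  finally show ?thesis .
qed

theorem lemma4p1:
  fixes chi p :: "real^3 \<Rightarrow> real" and \<rho> :: ereal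
  assumes "admissible_chi chi"
    and "P0_log p"
    and "2 \<le> ess_inf_exp p"
    and "ess_sup_exp p \<le> 6"
    and "1 \<le> \<rho>"
  shows "\<exists>C>0. \<forall>F :: real^3 \<Rightarrow> complex. F \<in> borel_measurable lborel
           \<and> FB_var_norm chi (\<lambda>\<xi>. 2 - 3 / p \<xi>) p F < top \<longrightarrow>
           X_norm chi \<rho> p (\<lambda>t. heat_hat t F) \<le> ennreal C * FB_var_norm chi (\<lambda>\<xi>. 2 - 3 / p \<xi>) p F"
proof -
  note chi = assms(1)
  have p_meas: "p \<in> borel_measurable lborel" and p_nonneg: "\<And>x. 0 \<le> p x"
    using assms(2) by (auto simp: P0_log_def P0_def intro: order_trans[OF zero_le_one])
  have p_ge_2: "AE \<xi> in lborel. 2 \<le> p \<xi>"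
    using assms(3) by (intro AE_ge_of_ess_inf_exp_ge) simp
  define C where "C = 16/9 * sqrt (1 + (16/3)^3 :: real)"
  have "1 \<le> sqrt (1 + (16/3)^3 :: real)"
    by simp
  hence C: "16/9 \<le> C" "C > 0"
    unfolding C_def by linarith+
  show ?thesis
  proof (intro exI[of _ C] conjI allI impI C(2))
    fix F :: "real^3 \<Rightarrow> complex"
    assume "F \<in> borel_measurable lborel \<and> FB_var_norm chi (\<lambda>\<xi>. 2 - 3 / p \<xi>) p F < top"
    hence F_meas: "F \<in> borel_measurable lborel"
      by simp
    have "LFB_var_norm chi \<rho> (\<lambda>\<xi>. 2 - 3 / p \<xi> + real_of_ereal (2 / \<rho>)) p (\<lambda>t. heat_hat t F)
            \<le> ennreal C * FB_var_norm chi (\<lambda>\<xi>. 2 - 3 / p \<xi>) p F"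
      using LFB_var_norm_heat_le[OF chi p_nonneg assms(5), where s = "\<lambda>\<xi>. 2 - 3 / p \<xi>"] C(1)
      by (meson order_trans mult_right_mono ennreal_leI zero_le)
    moreover have "LFB_norm chi 1 (5/2) 2 (\<lambda>t. heat_hat t F)
            \<le> ennreal C * FB_var_norm chi (\<lambda>\<xi>. 2 - 3 / p \<xi>) p F"
      and "LFB_norm chi \<infinity> (1/2) 2 (\<lambda>t. heat_hat t F)
            \<le> ennreal C * FB_var_norm chi (\<lambda>\<xi>. 2 - 3 / p \<xi>) p F"
      using LFB_norm_2_heat_le[OF chi p_meas p_ge_2 F_meas, of 1]
        LFB_norm_2_heat_le[OF chi p_meas p_ge_2 F_meas, of \<infinity>] by (simp_all add: C_def)
    ultimately show "X_norm chi \<rho> p (\<lambda>t. heat_hat t F) \<le> ennreal C * FB_var_norm chi (\<lambda>\<xi>. 2 - 3 / p \<xi>) p F"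
      by (simp add: X_norm_def)
  qed
qed

end
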